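(* Let $n\ge2$ and for $P\in\mathrm{Mat}(n^2,\mathbb{C})$ put $P_1=P\otimes I_n$, $P_2=I_n\otimes P$. (a) Let $Q>0$ be real and let $P$ be a nontrivial solution of rank $r$ to $$P^*=P,\quad P^2=P,\quad Q^2(P_1P_2P_1-P_2P_1P_2)=P_1-P_2 .\qquad(\ast)$$ Let $k=\tfrac12\operatorname{rank}(P_1-P_2)$. Then for all integers $m\ge1$, $$\operatorname{tr}_3\big((P_1P_2)^m\big)=rn+(Q^{-2m}-1)\,k .$$ (b) Let $P$ be an orthogonal projection of rank $r$. If there exist a real constant $Q>1$ and a positive integer $k$ such that $\operatorname{tr}_3\big((P_1P_2)^m\big)=rn+(Q^{-2m}-1)k$ holds for $m=1,2,3$, then $P$ is a nontrivial solution of $(\ast)$ for this $Q$.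
   Context: $I_n$ is the $n\times n$ identity matrix, $\otimes$ the Kronecker product, $\operatorname{tr}_3$ the matrix trace on $\mathrm{Mat}(n^3,\mathbb{C})$. A solution of $(\ast)$ is trivial if $P=0$ or $P=I_n\otimes I_n$, nontrivial otherwise. *)

theory Defs
  imports "Jordan_Normal_Form.Schur_Decomposition" "Jordan_Normal_Form.DL_Rank"
begin

definition kron_mat :: "'a :: times mat \<Rightarrow> 'a mat \<Rightarrow> 'a mat" where
  "kron_mat A B = mat (dim_row A * dim_row B) (dim_col A * dim_col B)
     (\<lambda>(i,j). A $$ (i div dim_row B, j div dim_col B) * B $$ (i mod dim_row B, j mod dim_col B))"

definition P1 :: "nat \<Rightarrow> complex mat \<Rightarrow> complex mat" where
  "P1 n P = kron_mat P (1\<^sub>m n)"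

definition P2 :: "nat \<Rightarrow> complex mat \<Rightarrow> complex mat" where
  "P2 n P = kron_mat (1\<^sub>m n) P"

definition mat_trace :: "'a :: comm_monoid_add mat \<Rightarrow> 'a" where
  "mat_trace A = (\<Sum>i<dim_row A. A $$ (i,i))"

definition crank :: "complex mat \<Rightarrow> nat" where
  "crank A = vec_space.rank (dim_row A) A"

definition is_solution :: "nat \<Rightarrow> real \<Rightarrow> complex mat \<Rightarrow> bool" where
  "is_solution n Q P \<longleftrightarrow>
     mat_adjoint P = P \<and> P * P = P \<and>
     (complex_of_real Q)^2 \<cdot>\<^sub>m (P1 n P * P2 n P * P1 n P - P2 n P * P1 n P * P2 n P)
       = P1 n P - P2 n P"

definition nontrivial :: "nat \<Rightarrow> complex mat \<Rightarrow> bool" where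
  "nontrivial n P \<longleftrightarrow> P \<noteq> 0\<^sub>m (n^2) (n^2) \<and> P \<noteq> kron_mat (1\<^sub>m n) (1\<^sub>m n)"

end

(* Write A = P_1 and B = P_2: orthogonal projections with equal traces, and
   tr ((AB)^m) = tr (X^m) for X = ABA. Multiplying ( * ) by A on both sides gives
   X^2 = (1 + q) X - q A with q = Q^-2, hence tr (X^m) = tr A - (1 + q + ... + q^(m-1)) (tr A - tr AB).
   The difference D = A - B satisfies D^3 = (1 - q) D, so for q ~= 1 the matrix D^2 / (1 - q) is an
   idempotent with the rank of D, and 2 (tr A - tr AB) = tr (D^2) = (1 - q) rank D; for q = 1 the
   hermitian D is nilpotent and tr (D^2) = 0.

   Conversely, the three trace identities make tr (G* G) vanish for G = (A - BA)(ABA - qA), so G = 0,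
   i.e. ABA - BABA = q (A - BA). The same argument for the pair (B, A), combined with the adjoint of
   that identity, yields ( * ). *)

theory Submission
  imports Defs
begin

subsection \<open>Trace and rank\<close>

lemma mat_trace_mult_comm:
  fixes A B :: "'a::comm_semiring_0 mat"
  assumes A: "A \<in> carrier_mat m k" and B: "B \<in> carrier_mat k m"
  shows "mat_trace (A * B) = mat_trace (B * A)"
proof -
  have "mat_trace (A * B) = (\<Sum>i<m. \<Sum>j<k. A $$ (i, j) * B $$ (j, i))"
    unfolding mat_trace_def using A B by (auto simp: scalar_prod_def lessThan_atLeast0 intro!: sum.cong)
  also have "\<dots> = (\<Sum>j<k. \<Sum>i<m. B $$ (j, i) * A $$ (i, j))"
    by (subst sum.swap) (simp add: mult.commute)
  also have "\<dots> = mat_trace (B * A)"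
    unfolding mat_trace_def using A B by (auto simp: scalar_prod_def lessThan_atLeast0 intro!: sum.cong)
  finally show ?thesis .
qed

lemma mat_trace_add:
  "A \<in> carrier_mat n n \<Longrightarrow> B \<in> carrier_mat n n \<Longrightarrow>
    mat_trace (A + B) = mat_trace A + mat_trace (B :: 'a::comm_monoid_add mat)"
  unfolding mat_trace_def by (simp add: sum.distrib)

lemma mat_trace_minus:
  "A \<in> carrier_mat n n \<Longrightarrow> B \<in> carrier_mat n n \<Longrightarrow>
    mat_trace (A - B) = mat_trace A - mat_trace (B :: 'a::ab_group_add mat)"
  unfolding mat_trace_def by (simp add: sum_subtractf)

lemma mat_trace_smult:
  "A \<in> carrier_mat n n \<Longrightarrow> mat_trace (c \<cdot>\<^sub>m A) = c * mat_trace (A :: 'a::comm_semiring_0 mat)"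
  unfolding mat_trace_def by (simp add: sum_distrib_left)

lemma mat_trace_one [simp]: "mat_trace (1\<^sub>m n :: 'a::semiring_1 mat) = of_nat n"
  unfolding mat_trace_def by simp

lemma mat_trace_zero [simp]: "mat_trace (0\<^sub>m n n :: 'a::comm_monoid_add mat) = 0"
  unfolding mat_trace_def by simp

context vec_space
begin

lemma col_space_mult_subset:
  assumes A: "A \<in> carrier_mat n na" and B: "B \<in> carrier_mat n nb" and X: "X \<in> carrier_mat nb na"
    and AB: "A = B * X"
  shows "col_space A \<subseteq> col_space B"
proof
  fix y assume "y \<in> col_space A"
  then obtain x where x: "x \<in> carrier_vec na" "A *\<^sub>v x = y" and y: "y \<in> carrier_vec n"
    using col_space_eq[OF A] A by auto
  have "B *\<^sub>v (X *\<^sub>v x) = y" using AB x X B by auto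
  moreover have "X *\<^sub>v x \<in> carrier_vec nb" using X x by auto
  ultimately show "y \<in> col_space B" using col_space_eq[OF B] B y by auto
qed

lemma rank_eq_if_mutual_factors:
  assumes A: "A \<in> carrier_mat n na" and B: "B \<in> carrier_mat n nb"
    and X: "X \<in> carrier_mat nb na" and Y: "Y \<in> carrier_mat na nb"
    and "A = B * X" and "B = A * Y"
  shows "rank A = rank B"
proof -
  have "col_space A = col_space B"
    using col_space_mult_subset[OF A B X] col_space_mult_subset[OF B A Y] assms by blast
  then show ?thesis unfolding rank_def col_space_def by simp
qed

lemma col_in_span_maximal_lin_indpt:
  assumes E: "E \<in> carrier_mat n nc" and S: "maximal S (\<lambda>T. T \<subseteq> set (cols E) \<and> lin_indpt T)"
    and j: "j < nc"
  shows "col E j \<in> span S"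
proof (rule ccontr)
  assume not_span: "col E j \<notin> span S"
  have SE: "S \<subseteq> set (cols E)" and li: "lin_indpt S" using S unfolding maximal_def by auto
  have S_carrier: "S \<subseteq> carrier_vec n" using SE E cols_dim by blast
  have c: "col E j \<in> set (cols E)" "col E j \<in> carrier_vec n"
    using j E by (auto simp: in_set_conv_nth intro!: exI[of _ j])
  then have "col E j \<notin> S" using not_span span_mem[OF S_carrier] by auto
  moreover have "lin_indpt (insert (col E j) S)"
    using lin_dep_iff_in_span[OF S_carrier li c(2)] not_span \<open>col E j \<notin> S\<close> by auto
  ultimately show False using S c(1) SE unfolding maximal_def by blast
qed

lemma rank_factorization:
  assumes E: "E \<in> carrier_mat n nc"
  obtains r C R where "C \<in> carrier_mat n r" "R \<in> carrier_mat r nc" "E = C * R"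
    "set (cols C) \<subseteq> set (cols E)" "distinct (cols C)" "lin_indpt (set (cols C))"
proof -
  have "lin_indpt {}" unfolding lin_dep_def by auto
  then obtain S where S: "maximal S (\<lambda>T. T \<subseteq> set (cols E) \<and> lin_indpt T)" and "finite S"
    using maximal_exists_superset[of "set (cols E)" "\<lambda>T. T \<subseteq> set (cols E) \<and> lin_indpt T" "{}"]
    by auto
  then obtain vs where vs: "set vs = S" "distinct vs" using finite_distinct_list by blast
  have SE: "S \<subseteq> set (cols E)" and li: "lin_indpt S" using S unfolding maximal_def by auto
  have S_carrier: "S \<subseteq> carrier_vec n" using SE E cols_dim by blast
  define C where "C = mat_of_cols n vs"
  have C: "C \<in> carrier_mat n (length vs)" unfolding C_def by simp
  have cols_C: "cols C = vs" unfolding C_def using vs S_carrier by simp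
  have "col E j \<in> span S" if "j < nc" for j
    using col_in_span_maximal_lin_indpt[OF E S that] .
  then have "\<exists>x \<in> carrier_vec (length vs). C *\<^sub>v x = col E j" if "j < nc" for j
    using that col_space_eq[OF C] C E unfolding col_space_def cols_C vs by auto
  then obtain w where w: "\<And>j. j < nc \<Longrightarrow> w j \<in> carrier_vec (length vs) \<and> C *\<^sub>v w j = col E j"
    by metis
  define R where "R = mat (length vs) nc (\<lambda>(i, j). w j $ i)"
  have R: "R \<in> carrier_mat (length vs) nc" unfolding R_def by simp
  have col_R: "col R j = w j" if "j < nc" for j
    using w[OF that] that unfolding R_def by (intro eq_vecI) auto
  have "E = C * R"
  proof (rule eq_matI)
    fix i j assume i: "i < dim_row (C * R)" and j: "j < dim_col (C * R)"
    have "(C * R) $$ (i, j) = (C *\<^sub>v col R j) $ i" using i j C R by simp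
    then show "E $$ (i, j) = (C * R) $$ (i, j)" using w col_R i j C R E by simp
  qed (use E C R in auto)
  then show ?thesis using SE vs li by (intro that[OF C R]) (simp_all add: cols_C)
qed

lemma mult_left_cancel_lin_indpt_cols:
  assumes C: "C \<in> carrier_mat n r" and "distinct (cols C)" "lin_indpt (set (cols C))"
    and Y: "Y \<in> carrier_mat r k" and Z: "Z \<in> carrier_mat r k" and CYZ: "C * Y = C * Z"
  shows "Y = Z"
proof (rule eq_matI)
  fix i j assume i: "i < dim_row Z" and j: "j < dim_col Z"
  define x where "x = col Y j - col Z j"
  have x: "x \<in> carrier_vec r" unfolding x_def using Y Z j by simp
  have j': "j < k" using j Z by simp
  have "C *\<^sub>v x = C *\<^sub>v col Y j - C *\<^sub>v col Z j"
    unfolding x_def using C Y Z j' by (intro mult_minus_distrib_mat_vec) auto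
  also have "\<dots> = col (C * Y) j - col (C * Z) j"
    by (simp only: col_mult2[OF C Y j'] col_mult2[OF C Z j'])
  finally have "C *\<^sub>v x = col (C * Y) j - col (C * Z) j" .
  moreover have "col (C * Z) j \<in> carrier_vec n" using C Z j by simp
  ultimately have "C *\<^sub>v x = 0\<^sub>v n" using CYZ minus_cancel_vec by metis
  then have "x = 0\<^sub>v r" using lin_depI[OF C x] assms(2,3) by auto
  then have "x $ i = 0" using i Z by simp
  then show "Y $$ (i, j) = Z $$ (i, j)" unfolding x_def using i j Y Z by simp
qed (use Y Z in auto)

lemma rank_idempotent:
  assumes E: "E \<in> carrier_mat n n" and EE: "E * E = E"
  shows "of_nat (rank E) = mat_trace E"
proof -
  obtain r C R where C: "C \<in> carrier_mat n r" and R: "R \<in> carrier_mat r n" and CR: "E = C * R"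
    and cols_C: "set (cols C) \<subseteq> set (cols E)" and indpt: "distinct (cols C)" "lin_indpt (set (cols C))"
    by (rule rank_factorization[OF E])
  have EC: "E * C = C"
  proof (rule eq_matI)
    fix i j assume i: "i < dim_row C" and j: "j < dim_col C"
    have "col C j \<in> set (cols E)" using cols_C j by (auto simp: cols_def)
    then obtain l where l: "l < n" "col C j = col E l" using E by (auto simp: cols_def)
    have "(E * C) $$ (i, j) = (E *\<^sub>v col E l) $ i" using i j l E C by simp
    also have "\<dots> = col (E * E) l $ i" using col_mult2[OF E E l(1)] by simp
    also have "\<dots> = col C j $ i" using EE l by simp
    also have "\<dots> = C $$ (i, j)" using i j C by simp
    finally show "(E * C) $$ (i, j) = C $$ (i, j)" .
  qed (use E C in auto)
  have "C * (R * C) = (C * R) * C" using C R by (simp add: assoc_mult_mat)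
  also have "\<dots> = C * 1\<^sub>m r" using EC CR C by simp
  finally have RC: "R * C = 1\<^sub>m r"
    using mult_left_cancel_lin_indpt_cols[OF C indpt, of "R * C" r "1\<^sub>m r"] C R by simp
  have "mat_trace E = of_nat r" unfolding CR mat_trace_mult_comm[OF C R] RC by simp
  moreover have "rank E = rank C"
    using rank_eq_if_mutual_factors[OF E C R C CR EC[symmetric]] .
  ultimately show ?thesis using lin_indpt_full_rank[OF C indpt] by simp
qed

end

subsection \<open>Kronecker products and adjoints\<close>

lemma sum_lessThan_mult_div_mod:
  fixes g :: "nat \<Rightarrow> nat \<Rightarrow> 'a::comm_monoid_add"
  assumes d: "d > 0"
  shows "(\<Sum>k<b * d. g (k div d) (k mod d)) = (\<Sum>i<b. \<Sum>j<d. g i j)"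
proof -
  have "k1 * d + k2 < b * d" if "k1 < b" "k2 < d" for k1 k2
  proof -
    have "k1 * d + k2 < (k1 + 1) * d" using that by simp
    also have "\<dots> \<le> b * d" using that by (intro mult_right_mono) auto
    finally show ?thesis .
  qed
  then have "(\<Sum>k<b * d. g (k div d) (k mod d)) = (\<Sum>(i, j)\<in>{..<b} \<times> {..<d}. g i j)"
    using d by (intro sum.reindex_bij_witness[where i = "\<lambda>(i, j). i * d + j"
          and j = "\<lambda>k. (k div d, k mod d)"]) (auto simp: less_mult_imp_div_less)
  then show ?thesis by (simp add: sum.cartesian_product)
qed

lemma kron_mat_carrier [simp]:
  "A \<in> carrier_mat a b \<Longrightarrow> B \<in> carrier_mat c d \<Longrightarrow> kron_mat A B \<in> carrier_mat (a * c) (b * d)"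
  unfolding kron_mat_def by auto

lemma dim_kron_mat [simp]:
  "dim_row (kron_mat A B) = dim_row A * dim_row B" "dim_col (kron_mat A B) = dim_col A * dim_col B"
  unfolding kron_mat_def by auto

lemma index_kron_mat:
  assumes "A \<in> carrier_mat a b" "B \<in> carrier_mat c d" "i < a * c" "j < b * d"
  shows "kron_mat A B $$ (i, j) = A $$ (i div c, j div d) * B $$ (i mod c, j mod d)"
  using assms unfolding kron_mat_def by auto

lemma kron_mat_mult:
  fixes A B C D :: "'a::comm_semiring_1 mat"
  assumes A: "A \<in> carrier_mat a b" and B: "B \<in> carrier_mat c d"
    and C: "C \<in> carrier_mat b e" and D: "D \<in> carrier_mat d f" and "c > 0" "d > 0" "f > 0"
  shows "kron_mat A B * kron_mat C D = kron_mat (A * C) (B * D)"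
proof (rule eq_matI)
  fix i j assume "i < dim_row (kron_mat (A * C) (B * D))" and "j < dim_col (kron_mat (A * C) (B * D))"
  then have i: "i < a * c" and j: "j < e * f" using A B C D by auto
  have "(kron_mat A B * kron_mat C D) $$ (i, j) =
      (\<Sum>k<b * d. kron_mat A B $$ (i, k) * kron_mat C D $$ (k, j))"
    using A B C D i j by (auto simp: scalar_prod_def lessThan_atLeast0 intro!: sum.cong)
  also have "\<dots> = (\<Sum>k<b * d. (A $$ (i div c, k div d) * C $$ (k div d, j div f)) *
      (B $$ (i mod c, k mod d) * D $$ (k mod d, j mod f)))"
    using A B C D i j by (intro sum.cong) (simp_all add: index_kron_mat ac_simps)
  also have "\<dots> = (\<Sum>k<b. A $$ (i div c, k) * C $$ (k, j div f)) *
      (\<Sum>l<d. B $$ (i mod c, l) * D $$ (l, j mod f))"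
    using sum_lessThan_mult_div_mod[OF \<open>d > 0\<close>, of "\<lambda>k l. (A $$ (i div c, k) * C $$ (k, j div f)) *
      (B $$ (i mod c, l) * D $$ (l, j mod f))" b] by (simp add: sum_product)
  also have "\<dots> = kron_mat (A * C) (B * D) $$ (i, j)"
    using A B C D i j assms(5-7)
    by (simp add: index_kron_mat[of _ a e _ c f] less_mult_imp_div_less scalar_prod_def lessThan_atLeast0)
  finally show "(kron_mat A B * kron_mat C D) $$ (i, j) = kron_mat (A * C) (B * D) $$ (i, j)" .
qed (use A B C D in auto)

lemma mat_trace_kron_mat:
  fixes A B :: "'a::comm_semiring_1 mat"
  assumes A: "A \<in> carrier_mat a a" and B: "B \<in> carrier_mat c c" and "c > 0"
  shows "mat_trace (kron_mat A B) = mat_trace A * mat_trace B"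
proof -
  have "mat_trace (kron_mat A B) = (\<Sum>k<a * c. A $$ (k div c, k div c) * B $$ (k mod c, k mod c))"
    unfolding mat_trace_def using A B by (auto simp: kron_mat_def intro!: sum.cong)
  also have "\<dots> = mat_trace A * mat_trace B"
    unfolding mat_trace_def
    using A B sum_lessThan_mult_div_mod[OF \<open>c > 0\<close>, of "\<lambda>i j. A $$ (i, i) * B $$ (j, j)" a]
    by (simp add: sum_product)
  finally show ?thesis .
qed

lemma kron_mat_one_one:
  assumes "b > 0"
  shows "kron_mat (1\<^sub>m a) (1\<^sub>m b) = (1\<^sub>m (a * b) :: 'a::semiring_1 mat)"
proof (rule eq_matI)
  fix i j assume "i < dim_row (1\<^sub>m (a * b) :: 'a mat)" and "j < dim_col (1\<^sub>m (a * b) :: 'a mat)"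
  then have i: "i < a * b" and j: "j < a * b" by auto
  show "kron_mat (1\<^sub>m a) (1\<^sub>m b) $$ (i, j) = (1\<^sub>m (a * b) :: 'a mat) $$ (i, j)"
    using i j assms by (simp add: index_kron_mat[of _ a a _ b b] less_mult_imp_div_less)
      (metis div_mult_mod_eq)
qed auto

lemma kron_mat_zero_left:
  "B \<in> carrier_mat c d \<Longrightarrow> kron_mat (0\<^sub>m a b) B = (0\<^sub>m (a * c) (b * d) :: 'a::semiring_0 mat)"
  by (rule eq_matI) (auto simp: kron_mat_def less_mult_imp_div_less)

lemma mat_adjoint_carrier [simp]: "A \<in> carrier_mat a b \<Longrightarrow> mat_adjoint A \<in> carrier_mat b a"
  unfolding mat_adjoint_def by auto

lemma index_mat_adjoint [simp]:
  "i < dim_col A \<Longrightarrow> j < dim_row A \<Longrightarrow> mat_adjoint A $$ (i, j) = conjugate (A $$ (j, i))"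
  unfolding mat_adjoint_def by (simp add: mat_of_rows_index)

lemma mat_adjoint_dim [simp]:
  "dim_row (mat_adjoint A) = dim_col A" "dim_col (mat_adjoint A) = dim_row A"
  unfolding mat_adjoint_def by auto

lemma mat_adjoint_mult:
  fixes A B :: "complex mat"
  assumes "A \<in> carrier_mat a b" and "B \<in> carrier_mat b c"
  shows "mat_adjoint (A * B) = mat_adjoint B * mat_adjoint A"
  by (rule eq_matI) (use assms in \<open>auto simp: scalar_prod_def ac_simps intro!: sum.cong\<close>)

lemma mat_adjoint_minus:
  fixes A B :: "complex mat"
  assumes "A \<in> carrier_mat a b" and "B \<in> carrier_mat a b"
  shows "mat_adjoint (A - B) = mat_adjoint A - mat_adjoint B"
  by (rule eq_matI) (use assms in auto)

lemma mat_adjoint_smult: "mat_adjoint (c \<cdot>\<^sub>m A) = cnj c \<cdot>\<^sub>m mat_adjoint (A :: complex mat)"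
  by (rule eq_matI) auto

lemma mat_adjoint_one [simp]: "mat_adjoint (1\<^sub>m n :: complex mat) = 1\<^sub>m n"
  by (rule eq_matI) auto

lemma mat_adjoint_kron_mat:
  fixes A B :: "complex mat"
  assumes A: "A \<in> carrier_mat a b" and B: "B \<in> carrier_mat c d" and "c > 0" "d > 0"
  shows "mat_adjoint (kron_mat A B) = kron_mat (mat_adjoint A) (mat_adjoint B)"
proof (rule eq_matI)
  fix i j assume "i < dim_row (kron_mat (mat_adjoint A) (mat_adjoint B))"
    and "j < dim_col (kron_mat (mat_adjoint A) (mat_adjoint B))"
  then have i: "i < b * d" and j: "j < a * c" using A B by auto
  then have "i div d < b" "j div c < a" using assms by (auto simp: less_mult_imp_div_less)
  then show "mat_adjoint (kron_mat A B) $$ (i, j) = kron_mat (mat_adjoint A) (mat_adjoint B) $$ (i, j)"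
    using i j A B assms
    by (simp add: index_kron_mat[of "mat_adjoint A" b a "mat_adjoint B" d c] index_kron_mat[OF A B j i])
qed (use A B in auto)

lemma mat_eq_zero_if_trace_adjoint_mult_zero:
  fixes M :: "complex mat"
  assumes M: "M \<in> carrier_mat a b" and "mat_trace (mat_adjoint M * M) = 0"
  shows "M = 0\<^sub>m a b"
proof -
  have "mat_trace (mat_adjoint M * M) = of_real (\<Sum>j<b. \<Sum>i<a. (cmod (M $$ (i, j)))\<^sup>2)"
    unfolding mat_trace_def using M
    by (auto simp: scalar_prod_def lessThan_atLeast0 intro!: sum.cong)
      (metis complex_norm_square mult.commute of_real_power)
  then have "(\<Sum>j<b. \<Sum>i<a. (cmod (M $$ (i, j)))\<^sup>2) = 0"
    using assms(2) of_real_eq_0_iff by metis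
  then have "\<forall>j<b. \<forall>i<a. cmod (M $$ (i, j)) = 0"
    by (simp add: sum_nonneg_eq_0_iff sum_nonneg)
  then show ?thesis using M by (intro eq_matI) auto
qed

text \<open>Identities between polynomial expressions in N \<times> N matrices are proved by rewriting both
  sides with square_ring_simps into linear combinations of right-associated words and then
  comparing entries with square_entry_simps; index_mult_mat is deleted so that the entries of
  the words stay atomic.\<close>

locale square_matrices =
  fixes N :: nat
begin

lemma square_closed:
  fixes A B :: "'a::comm_ring_1 mat"
  shows "\<lbrakk>A \<in> carrier_mat N N; B \<in> carrier_mat N N\<rbrakk> \<Longrightarrow> A * B \<in> carrier_mat N N"
    and "\<lbrakk>A \<in> carrier_mat N N; B \<in> carrier_mat N N\<rbrakk> \<Longrightarrow> A + B \<in> carrier_mat N N"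
    and "\<lbrakk>A \<in> carrier_mat N N; B \<in> carrier_mat N N\<rbrakk> \<Longrightarrow> A - B \<in> carrier_mat N N"
    and "A \<in> carrier_mat N N \<Longrightarrow> c \<cdot>\<^sub>m A \<in> carrier_mat N N"
    and "1\<^sub>m N \<in> carrier_mat N N"
    and "A \<in> carrier_mat N N \<Longrightarrow> A ^\<^sub>m k \<in> carrier_mat N N"
  by auto

lemma square_ring_simps:
  fixes A B C :: "'a::comm_ring_1 mat"
  shows "\<lbrakk>A \<in> carrier_mat N N; B \<in> carrier_mat N N; C \<in> carrier_mat N N\<rbrakk> \<Longrightarrow>
      A * (B + C) = A * B + A * C"
    and "\<lbrakk>A \<in> carrier_mat N N; B \<in> carrier_mat N N; C \<in> carrier_mat N N\<rbrakk> \<Longrightarrow>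
      (A + B) * C = A * C + B * C"
    and "\<lbrakk>A \<in> carrier_mat N N; B \<in> carrier_mat N N; C \<in> carrier_mat N N\<rbrakk> \<Longrightarrow>
      A * (B - C) = A * B - A * C"
    and "\<lbrakk>A \<in> carrier_mat N N; B \<in> carrier_mat N N; C \<in> carrier_mat N N\<rbrakk> \<Longrightarrow>
      (A - B) * C = A * C - B * C"
    and "\<lbrakk>A \<in> carrier_mat N N; B \<in> carrier_mat N N; C \<in> carrier_mat N N\<rbrakk> \<Longrightarrow>
      (A * B) * C = A * (B * C)"
    and "\<lbrakk>A \<in> carrier_mat N N; B \<in> carrier_mat N N\<rbrakk> \<Longrightarrow> A * (c \<cdot>\<^sub>m B) = c \<cdot>\<^sub>m (A * B)"
    and "\<lbrakk>A \<in> carrier_mat N N; B \<in> carrier_mat N N\<rbrakk> \<Longrightarrow> (c \<cdot>\<^sub>m A) * B = c \<cdot>\<^sub>m (A * B)"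
    and "A \<in> carrier_mat N N \<Longrightarrow> 1\<^sub>m N * A = A"
    and "A \<in> carrier_mat N N \<Longrightarrow> A * 1\<^sub>m N = A"
    and "c \<cdot>\<^sub>m (d \<cdot>\<^sub>m A) = (c * d) \<cdot>\<^sub>m A"
    and "1 \<cdot>\<^sub>m A = A"
  by (auto simp: mult_add_distrib_mat add_mult_distrib_mat mult_minus_distrib_mat
      minus_mult_distrib_mat mult_smult_distrib mult_smult_assoc_mat assoc_mult_mat
      intro!: eq_matI)

lemma square_entry_simps:
  fixes A B :: "'a::comm_ring_1 mat"
  shows "\<lbrakk>A \<in> carrier_mat N N; B \<in> carrier_mat N N; i < N; j < N\<rbrakk> \<Longrightarrow>
      (A + B) $$ (i, j) = A $$ (i, j) + B $$ (i, j)"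
    and "\<lbrakk>A \<in> carrier_mat N N; B \<in> carrier_mat N N; i < N; j < N\<rbrakk> \<Longrightarrow>
      (A - B) $$ (i, j) = A $$ (i, j) - B $$ (i, j)"
    and "\<lbrakk>A \<in> carrier_mat N N; i < N; j < N\<rbrakk> \<Longrightarrow> (c \<cdot>\<^sub>m A) $$ (i, j) = c * A $$ (i, j)"
  by auto

lemma square_eqI:
  "A \<in> carrier_mat N N \<Longrightarrow> B \<in> carrier_mat N N \<Longrightarrow>
    (\<And>i j. i < N \<Longrightarrow> j < N \<Longrightarrow> A $$ (i, j) = B $$ (i, j)) \<Longrightarrow> A = B"
  by (rule eq_matI) auto

lemma power_mult_shift:
  fixes A B :: "'a::comm_ring_1 mat"
  assumes A: "A \<in> carrier_mat N N" and B: "B \<in> carrier_mat N N"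
  shows "(A * B) ^\<^sub>m m * A = A * (B * A) ^\<^sub>m m"
proof (induction m)
  case 0
  show ?case using A B by simp
next
  case (Suc m)
  have "(A * B) ^\<^sub>m Suc m * A = ((A * B) ^\<^sub>m m * A) * (B * A)"
    using A B by (simp add: square_ring_simps square_closed)
  also have "\<dots> = A * (B * A) ^\<^sub>m Suc m"
    unfolding Suc using A B by (simp add: square_ring_simps square_closed)
  finally show ?case .
qed

lemma power_Suc_mult:
  fixes A B :: "'a::comm_ring_1 mat"
  assumes A: "A \<in> carrier_mat N N" and B: "B \<in> carrier_mat N N"
  shows "(A * B) ^\<^sub>m Suc m = A * ((B * A) ^\<^sub>m m * B)"
proof -
  have "(A * B) ^\<^sub>m Suc m = ((A * B) ^\<^sub>m m * A) * B"
    using A B by (simp add: square_ring_simps square_closed)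
  also have "\<dots> = A * ((B * A) ^\<^sub>m m * B)"
    unfolding power_mult_shift[OF A B] using A B by (simp add: square_ring_simps square_closed)
  finally show ?thesis .
qed

lemma mat_trace_power_mult_swap:
  fixes A B :: "'a::comm_ring_1 mat"
  assumes A: "A \<in> carrier_mat N N" and B: "B \<in> carrier_mat N N"
  shows "mat_trace ((B * A) ^\<^sub>m m) = mat_trace ((A * B) ^\<^sub>m m)"
proof (cases m)
  case 0
  then show ?thesis using A B by simp
next
  case (Suc k)
  have "mat_trace ((B * A) ^\<^sub>m m) = mat_trace (((A * B) ^\<^sub>m k * A) * B)"
    unfolding Suc power_Suc_mult[OF B A]
    using A B by (intro mat_trace_mult_comm[of _ N N]) (simp_all add: square_closed)
  also have "((A * B) ^\<^sub>m k * A) * B = (A * B) ^\<^sub>m m"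
    unfolding Suc using A B by (simp add: square_ring_simps square_closed)
  finally show ?thesis .
qed

lemma mat_trace_power_mult_idempotent:
  fixes A B :: "'a::comm_ring_1 mat"
  assumes A: "A \<in> carrier_mat N N" and B: "B \<in> carrier_mat N N" and AA: "A * A = A"
  shows "mat_trace ((A * B) ^\<^sub>m Suc m) = mat_trace ((A * B * A) ^\<^sub>m Suc m)"
proof -
  have power_A: "(A * B) ^\<^sub>m Suc k * A = (A * B * A) ^\<^sub>m Suc k" for k
  proof (induction k)
    case 0
    show ?case using A B by simp
  next
    case (Suc k)
    have "(A * B) ^\<^sub>m Suc (Suc k) * A = ((A * B) ^\<^sub>m Suc k * (A * A)) * (B * A)"
      unfolding AA using A B by (simp add: square_ring_simps square_closed)
    also have "\<dots> = ((A * B) ^\<^sub>m Suc k * A) * (A * B * A)"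
      using A B by (simp add: square_ring_simps square_closed)
    also have "\<dots> = (A * B * A) ^\<^sub>m Suc (Suc k)"
      unfolding Suc by simp
    finally show ?case .
  qed
  have "A * (A * B) ^\<^sub>m Suc m = (A * A) * ((B * A) ^\<^sub>m m * B)"
    unfolding power_Suc_mult[OF A B] using A B by (simp add: square_ring_simps square_closed)
  then have "(A * B) ^\<^sub>m Suc m = A * (A * B) ^\<^sub>m Suc m"
    unfolding AA power_Suc_mult[OF A B] by simp
  also have "mat_trace \<dots> = mat_trace ((A * B) ^\<^sub>m Suc m * A)"
    using A B by (intro mat_trace_mult_comm[of _ N N]) (simp_all add: square_closed)
  finally show ?thesis unfolding power_A .
qed

lemma pow_mat_of_quadratic:
  fixes A X :: "'a::comm_ring_1 mat"
  assumes A: "A \<in> carrier_mat N N" and X: "X \<in> carrier_mat N N"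
    and AX: "A * X = X" and XX: "X * X = (1 + q) \<cdot>\<^sub>m X - q \<cdot>\<^sub>m A"
  shows "X ^\<^sub>m Suc m = A - (\<Sum>i<Suc m. q ^ i) \<cdot>\<^sub>m (A - X)"
proof (induction m)
  case 0
  show ?case using A X by (intro square_eqI) (simp_all add: square_closed)
next
  case (Suc m)
  define s where "s = (\<Sum>i<Suc m. q ^ i)"
  have s: "(\<Sum>i<Suc (Suc m). q ^ i) = 1 + q * s"
    unfolding s_def by (subst sum.lessThan_Suc_shift) (simp add: sum_distrib_left distrib_left)
  have "X ^\<^sub>m Suc (Suc m) = (A - s \<cdot>\<^sub>m (A - X)) * X" using Suc X by (simp add: s_def)
  also have "\<dots> = X - s \<cdot>\<^sub>m (X - ((1 + q) \<cdot>\<^sub>m X - q \<cdot>\<^sub>m A))"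
    using A X by (simp add: square_ring_simps square_closed AX XX)
  also have "\<dots> = A - (\<Sum>i<Suc (Suc m). q ^ i) \<cdot>\<^sub>m (A - X)"
    unfolding s using A X by (intro square_eqI) (simp_all add: square_closed algebra_simps)
  finally show ?case .
qed

lemma rank_of_hermitian_cubic:
  fixes D :: "complex mat"
  assumes D: "D \<in> carrier_mat N N" and herm: "mat_adjoint D = D" and cube: "D * D * D = c \<cdot>\<^sub>m D"
  shows "c * of_nat (vec_space.rank N D) = mat_trace (D * D)"
proof (cases "c = 0")
  case True
  have "mat_adjoint (D * D) * (D * D) = D * D * D * D"
    using D herm by (simp add: mat_adjoint_mult[of _ N N _ N] square_ring_simps square_closed)
  also have "\<dots> = (c \<cdot>\<^sub>m D) * D" unfolding cube ..
  also have "\<dots> = 0\<^sub>m N N" using True D by (intro eq_matI) (auto simp: scalar_prod_def)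
  finally have "D * D = 0\<^sub>m N N"
    using D by (intro mat_eq_zero_if_trace_adjoint_mult_zero) (simp_all add: square_closed)
  then show ?thesis using True by simp
next
  case False
  define E where "E = (1 / c) \<cdot>\<^sub>m (D * D)"
  have E: "E \<in> carrier_mat N N" unfolding E_def using D by (simp add: square_closed)
  have DD: "D * (D * D) = c \<cdot>\<^sub>m D" using cube D by (simp add: square_ring_simps)
  have ED: "E * D = D"
    unfolding E_def using D DD False by (simp add: square_ring_simps square_closed)
  have E_factor: "E = D * ((1 / c) \<cdot>\<^sub>m D)" unfolding E_def using D by (simp add: square_ring_simps)
  have "E * E = (1 / c) \<cdot>\<^sub>m (E * D * D)"
    unfolding E_def using D by (simp add: square_ring_simps square_closed)
  also have "\<dots> = E" by (simp only: ED) (simp only: E_def)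
  finally have "of_nat (vec_space.rank N E) = mat_trace E" by (rule vec_space.rank_idempotent[OF E])
  moreover have "vec_space.rank N E = vec_space.rank N D"
    using vec_space.rank_eq_if_mutual_factors[OF E D _ D E_factor ED[symmetric]] D by simp
  ultimately show ?thesis
    unfolding E_def using D False by (simp add: mat_trace_smult[of _ N] square_closed)
qed

end

subsection \<open>Pairs of projections\<close>

locale idempotent_pair = square_matrices N for N +
  fixes A B :: "'a::comm_ring_1 mat"
  assumes A_carrier: "A \<in> carrier_mat N N" and B_carrier: "B \<in> carrier_mat N N"
    and A_idem: "A * A = A" and B_idem: "B * B = B"
begin

lemma idem_left:
  "M \<in> carrier_mat N N \<Longrightarrow> A * (A * M) = A * M"
  "M \<in> carrier_mat N N \<Longrightarrow> B * (B * M) = B * M"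
  using A_carrier B_carrier A_idem B_idem by (metis assoc_mult_mat)+

lemmas pair_simps = square_ring_simps square_closed square_entry_simps
  A_carrier B_carrier A_idem B_idem idem_left

lemma sandwich_square:
  assumes rel: "A * B * A - B * A * B = q \<cdot>\<^sub>m (A - B)"
  shows "A * B * A * (A * B * A) = (1 + q) \<cdot>\<^sub>m (A * B * A) - q \<cdot>\<^sub>m A"
proof -
  have "A * B * A * (A * B * A) = A * B * A - A * (A * B * A - B * A * B) * A"
    by (intro square_eqI) (simp_all add: pair_simps del: index_mult_mat)
  also have "\<dots> = A * B * A - A * (q \<cdot>\<^sub>m (A - B)) * A"
    unfolding rel ..
  also have "\<dots> = (1 + q) \<cdot>\<^sub>m (A * B * A) - q \<cdot>\<^sub>m A"
    by (intro square_eqI) (simp_all add: pair_simps algebra_simps del: index_mult_mat)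
  finally show ?thesis .
qed

lemma cube_of_difference:
  assumes rel: "A * B * A - B * A * B = q \<cdot>\<^sub>m (A - B)"
  shows "(A - B) * (A - B) * (A - B) = (1 - q) \<cdot>\<^sub>m (A - B)"
proof -
  have "(A - B) * (A - B) * (A - B) = (A - B) - (A * B * A - B * A * B)"
    by (intro square_eqI) (simp_all add: pair_simps del: index_mult_mat)
  also have "\<dots> = (1 - q) \<cdot>\<^sub>m (A - B)"
    unfolding rel by (intro square_eqI) (simp_all add: pair_simps algebra_simps del: index_mult_mat)
  finally show ?thesis .
qed

lemma mat_trace_square_of_difference:
  assumes "mat_trace A = mat_trace B"
  shows "mat_trace ((A - B) * (A - B)) = 2 * (mat_trace A - mat_trace (A * B))"
proof -
  have "(A - B) * (A - B) = A + B - A * B - B * A"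
    by (intro square_eqI) (simp_all add: pair_simps del: index_mult_mat)
  moreover have "mat_trace (B * A) = mat_trace (A * B)"
    using A_carrier B_carrier by (rule mat_trace_mult_comm[symmetric])
  ultimately show ?thesis
    using assms A_carrier B_carrier by (simp add: mat_trace_add[of _ N] mat_trace_minus[of _ N] square_closed)
qed

lemma mat_trace_sandwich_cubic_eq_0:
  assumes T: "\<And>m. m \<in> {1, 2, 3} \<Longrightarrow> mat_trace ((A * B) ^\<^sub>m m) = mat_trace A + (q ^ m - 1) * k"
  defines "X \<equiv> A * B * A"
  shows "mat_trace (q\<^sup>2 \<cdot>\<^sub>m A - (2 * q + q\<^sup>2) \<cdot>\<^sub>m X + (1 + 2 * q) \<cdot>\<^sub>m (X * X) - X * X * X) = 0"
proof -
  \<comment> \<open>Since tr (X^j) = (t - k) + k q^j for j = 1, 2, 3, the trace of p(X) for a polynomial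
    p with p(0) = 0 and degree at most 3 is (t - k) p(1) + k p(q); here p(x) = -x (x - q)^2 (x - 1).\<close>
  define t where "t = mat_trace A"
  have X: "X \<in> carrier_mat N N" unfolding X_def using A_carrier B_carrier by simp
  have trX: "mat_trace (X ^\<^sub>m m) = t + (q ^ m - 1) * k" if "m \<in> {1, 2, 3}" for m
  proof -
    have m: "Suc (m - 1) = m" using that by auto
    show ?thesis
      using T[OF that] mat_trace_power_mult_idempotent[OF A_carrier B_carrier A_idem, of "m - 1"]
      unfolding m X_def t_def by simp
  qed
  have "X ^\<^sub>m 2 = X * X" "X ^\<^sub>m 3 = X * X * X"
    using X by (simp_all add: numeral_2_eq_2 numeral_3_eq_3)
  then have "mat_trace (q\<^sup>2 \<cdot>\<^sub>m A - (2 * q + q\<^sup>2) \<cdot>\<^sub>m X + (1 + 2 * q) \<cdot>\<^sub>m (X * X) - X * X * X) =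
      q\<^sup>2 * t - (2 * q + q\<^sup>2) * (t + (q - 1) * k) + (1 + 2 * q) * (t + (q\<^sup>2 - 1) * k) - (t + (q ^ 3 - 1) * k)"
    using trX[of 1] trX[of 2] trX[of 3] X A_carrier unfolding t_def
    by (simp add: mat_trace_add[of _ N] mat_trace_minus[of _ N] mat_trace_smult[of _ N] square_closed)
  also have "\<dots> = 0" by (simp add: algebra_simps power2_eq_square power3_eq_cube)
  finally show ?thesis .
qed

end

locale orthogonal_projection_pair = idempotent_pair N A B for N and A B :: "complex mat" +
  assumes A_hermitian: "mat_adjoint A = A" and B_hermitian: "mat_adjoint B = B"
begin

lemma mat_trace_power_if_relation:
  assumes rel: "A * B * A - B * A * B = q \<cdot>\<^sub>m (A - B)"
    and tr: "mat_trace A = mat_trace B" and "m > 0"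
  shows "mat_trace ((A * B) ^\<^sub>m m) =
    mat_trace A + (q ^ m - 1) * of_nat (vec_space.rank N (A - B)) / 2"
proof -
  obtain k where m: "m = Suc k" using \<open>m > 0\<close> by (cases m) auto
  define X where "X = A * B * A"
  define s where "s = (\<Sum>i<m. q ^ i)"
  define r where "r = (of_nat (vec_space.rank N (A - B)) :: complex)"
  have X: "X \<in> carrier_mat N N" unfolding X_def using A_carrier B_carrier by simp
  have AX: "A * X = X" unfolding X_def by (simp add: pair_simps)
  have trX: "mat_trace X = mat_trace (A * B)"
    using mat_trace_power_mult_idempotent[OF A_carrier B_carrier A_idem, of 0] A_carrier B_carrier
    unfolding X_def by simp
  have D: "A - B \<in> carrier_mat N N" by (simp add: pair_simps)
  have "mat_adjoint (A - B) = A - B"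
    using mat_adjoint_minus[OF A_carrier B_carrier] A_hermitian B_hermitian by simp
  then have "(1 - q) * r = 2 * (mat_trace A - mat_trace (A * B))"
    using rank_of_hermitian_cubic[OF D _ cube_of_difference[OF rel]] mat_trace_square_of_difference[OF tr]
    unfolding r_def by simp
  then have half: "mat_trace A - mat_trace (A * B) = (1 - q) * r / 2" by simp
  have s: "s * (1 - q) = 1 - q ^ m" unfolding s_def by (metis one_diff_power_eq mult.commute)
  have "mat_trace ((A * B) ^\<^sub>m m) = mat_trace (X ^\<^sub>m m)"
    unfolding m X_def by (rule mat_trace_power_mult_idempotent[OF A_carrier B_carrier A_idem])
  also have "\<dots> = mat_trace (A - s \<cdot>\<^sub>m (A - X))"
    unfolding m s_def using pow_mat_of_quadratic[OF A_carrier X AX sandwich_square[OF rel, folded X_def]]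
    by simp
  also have "\<dots> = mat_trace A - s * (mat_trace A - mat_trace (A * B))"
    using A_carrier X trX by (simp add: mat_trace_minus[of _ N] mat_trace_smult[of _ N] square_closed)
  also have "\<dots> = mat_trace A - (s * (1 - q)) * r / 2"
    unfolding half by simp
  also have "\<dots> = mat_trace A + (q ^ m - 1) * r / 2"
    unfolding s by (simp add: field_simps)
  finally show ?thesis unfolding r_def .
qed

lemma one_sided_relations_if_traces:
  assumes q: "cnj q = q"
    and T: "\<And>m. m \<in> {1, 2, 3} \<Longrightarrow> mat_trace ((A * B) ^\<^sub>m m) = mat_trace A + (q ^ m - 1) * k"
  shows "(A - B * A) * (A * B * A - q \<cdot>\<^sub>m A) = 0\<^sub>m N N"
    and "(A * B * A - q \<cdot>\<^sub>m A) * (A - A * B) = 0\<^sub>m N N"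
proof -
  define X where "X = A * B * A"
  define G where "G = (A - B * A) * (X - q \<cdot>\<^sub>m A)"
  have X: "X \<in> carrier_mat N N" unfolding X_def using A_carrier B_carrier by simp
  have G: "G \<in> carrier_mat N N" unfolding G_def using X by (simp add: pair_simps)
  have adj_X: "mat_adjoint X = X"
    unfolding X_def using A_hermitian B_hermitian
    by (simp add: mat_adjoint_mult[of _ N N _ N] pair_simps)
  have adj_G: "mat_adjoint G = (X - q \<cdot>\<^sub>m A) * (A - A * B)"
    unfolding G_def using X A_carrier B_carrier q adj_X A_hermitian B_hermitian
    by (simp add: mat_adjoint_mult[of _ N N _ N] mat_adjoint_minus[of _ N N] mat_adjoint_smult square_closed)
  have "mat_adjoint G * G = (X - q \<cdot>\<^sub>m A) * (A - A * B) * ((A - B * A) * (X - q \<cdot>\<^sub>m A))"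
    by (simp only: adj_G) (simp only: G_def)
  also have "\<dots> = q\<^sup>2 \<cdot>\<^sub>m A - (2 * q + q\<^sup>2) \<cdot>\<^sub>m X + (1 + 2 * q) \<cdot>\<^sub>m (X * X) - X * X * X"
    unfolding X_def
    by (intro square_eqI) (simp_all add: pair_simps algebra_simps power2_eq_square del: index_mult_mat)
  finally have G0: "G = 0\<^sub>m N N"
    using mat_eq_zero_if_trace_adjoint_mult_zero[OF G] mat_trace_sandwich_cubic_eq_0[OF T]
    unfolding X_def by simp
  then show "(A - B * A) * (A * B * A - q \<cdot>\<^sub>m A) = 0\<^sub>m N N" unfolding G_def X_def .
  have "mat_adjoint G = 0\<^sub>m N N" unfolding G0 by (rule eq_matI) auto
  then show "(A * B * A - q \<cdot>\<^sub>m A) * (A - A * B) = 0\<^sub>m N N" unfolding adj_G X_def .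
qed

lemma relation_if_traces:
  assumes q: "cnj q = q" and tr: "mat_trace A = mat_trace B"
    and T: "\<And>m. m \<in> {1, 2, 3} \<Longrightarrow> mat_trace ((A * B) ^\<^sub>m m) = mat_trace A + (q ^ m - 1) * k"
  shows "A * B * A - B * A * B = q \<cdot>\<^sub>m (A - B)"
proof -
  interpret swapped: orthogonal_projection_pair N B A
    by unfold_locales (simp_all add: pair_simps A_hermitian B_hermitian)
  have T_swapped: "mat_trace ((B * A) ^\<^sub>m m) = mat_trace B + (q ^ m - 1) * k" if "m \<in> {1, 2, 3}" for m
    using T[OF that] tr mat_trace_power_mult_swap[OF A_carrier B_carrier] by simp
  have "A * B * A - B * A * B = q \<cdot>\<^sub>m (A - B)
      + ((A - B * A) * (A * B * A - q \<cdot>\<^sub>m A) - (B * A * B - q \<cdot>\<^sub>m B) * (B - B * A))"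
    by (intro square_eqI) (simp_all add: pair_simps algebra_simps del: index_mult_mat)
  also have "(A - B * A) * (A * B * A - q \<cdot>\<^sub>m A) = 0\<^sub>m N N"
    by (rule one_sided_relations_if_traces(1)[OF q T])
  also have "(B * A * B - q \<cdot>\<^sub>m B) * (B - B * A) = 0\<^sub>m N N"
    by (rule swapped.one_sided_relations_if_traces(2)[OF q T_swapped])
  also have "q \<cdot>\<^sub>m (A - B) + (0\<^sub>m N N - 0\<^sub>m N N) = q \<cdot>\<^sub>m (A - B)"
    by (intro square_eqI) (simp_all add: pair_simps)
  finally show ?thesis .
qed

end

subsection \<open>The tensor factors\<close>

lemma P1_carrier: "P \<in> carrier_mat (n\<^sup>2) (n\<^sup>2) \<Longrightarrow> P1 n P \<in> carrier_mat (n ^ 3) (n ^ 3)"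
  unfolding P1_def using kron_mat_carrier[of P "n\<^sup>2" "n\<^sup>2" "1\<^sub>m n" n n]
  by (simp add: power2_eq_square power3_eq_cube)

lemma P2_carrier: "P \<in> carrier_mat (n\<^sup>2) (n\<^sup>2) \<Longrightarrow> P2 n P \<in> carrier_mat (n ^ 3) (n ^ 3)"
  unfolding P2_def using kron_mat_carrier[of "1\<^sub>m n" n n P "n\<^sup>2" "n\<^sup>2"]
  by (simp add: power2_eq_square power3_eq_cube mult.assoc)

lemma mat_trace_P1_P2:
  assumes "n > 0" and P: "P \<in> carrier_mat (n\<^sup>2) (n\<^sup>2)"
  shows "mat_trace (P1 n P) = of_nat n * mat_trace P" and "mat_trace (P2 n P) = of_nat n * mat_trace P"
  using mat_trace_kron_mat[OF P one_carrier_mat, of n] mat_trace_kron_mat[OF one_carrier_mat P, of n] assms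
  by (simp_all add: P1_def P2_def mult.commute)

lemma orthogonal_projection_pair_P1_P2:
  assumes "n > 0" and P: "P \<in> carrier_mat (n\<^sup>2) (n\<^sup>2)" and "mat_adjoint P = P" and "P * P = P"
  shows "orthogonal_projection_pair (n ^ 3) (P1 n P) (P2 n P)"
proof
  show "P1 n P \<in> carrier_mat (n ^ 3) (n ^ 3)" "P2 n P \<in> carrier_mat (n ^ 3) (n ^ 3)"
    using P by (simp_all add: P1_carrier P2_carrier)
  show "P1 n P * P1 n P = P1 n P" "P2 n P * P2 n P = P2 n P"
    using assms kron_mat_mult[OF P one_carrier_mat P one_carrier_mat] kron_mat_mult[OF one_carrier_mat P one_carrier_mat P]
    by (simp_all add: P1_def P2_def)
  show "mat_adjoint (P1 n P) = P1 n P" "mat_adjoint (P2 n P) = P2 n P"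
    using assms mat_adjoint_kron_mat[OF P one_carrier_mat] mat_adjoint_kron_mat[OF one_carrier_mat P]
    by (simp_all add: P1_def P2_def)
qed

lemma crank_idempotent:
  assumes "P \<in> carrier_mat m m" and "P * P = P"
  shows "of_nat (crank P) = mat_trace P"
  using vec_space.rank_idempotent[OF assms] assms(1) unfolding crank_def by simp

lemma is_solution_iff_relation:
  assumes "n > 0" and P: "P \<in> carrier_mat (n\<^sup>2) (n\<^sup>2)" and "Q \<noteq> 0"
  shows "is_solution n Q P \<longleftrightarrow> mat_adjoint P = P \<and> P * P = P \<and>
    P1 n P * P2 n P * P1 n P - P2 n P * P1 n P * P2 n P
      = complex_of_real (1 / Q\<^sup>2) \<cdot>\<^sub>m (P1 n P - P2 n P)"
proof -
  interpret square_matrices "n ^ 3" .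
  have A: "P1 n P \<in> carrier_mat (n ^ 3) (n ^ 3)" and B: "P2 n P \<in> carrier_mat (n ^ 3) (n ^ 3)"
    using P by (simp_all add: P1_carrier P2_carrier)
  have "c \<cdot>\<^sub>m M = M' \<longleftrightarrow> M = (1 / c) \<cdot>\<^sub>m M'"
    if "c \<noteq> 0" "M \<in> carrier_mat (n ^ 3) (n ^ 3)" "M' \<in> carrier_mat (n ^ 3) (n ^ 3)" for c :: complex and M M'
    using that by (auto simp: square_ring_simps)
  from this[of "(complex_of_real Q)\<^sup>2"] show ?thesis
    unfolding is_solution_def using A B \<open>Q \<noteq> 0\<close> by (simp add: square_closed power_one_over)
qed

lemma P1_mult_P2_if_trivial:
  assumes "n > 0" and "P = 0\<^sub>m (n\<^sup>2) (n\<^sup>2) \<or> P = kron_mat (1\<^sub>m n) (1\<^sub>m n)"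
  shows "P1 n P * P2 n P = P1 n P"
  using assms(2)
proof
  assume "P = 0\<^sub>m (n\<^sup>2) (n\<^sup>2)"
  then have "P1 n P = 0\<^sub>m (n ^ 3) (n ^ 3)"
    unfolding P1_def by (simp add: kron_mat_zero_left power2_eq_square power3_eq_cube)
  then show ?thesis using P2_carrier[of P n] \<open>P = _\<close> by simp
next
  assume "P = kron_mat (1\<^sub>m n) (1\<^sub>m n)"
  then have "P = 1\<^sub>m (n * n)" using kron_mat_one_one[OF \<open>n > 0\<close>] by simp
  then have "P1 n P = 1\<^sub>m (n ^ 3)" and "P2 n P = 1\<^sub>m (n ^ 3)"
    unfolding P1_def P2_def using \<open>n > 0\<close>
    by (simp_all add: kron_mat_one_one power3_eq_cube mult.assoc)
  then show ?thesis by simp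
qed

lemma mat_trace_power_P1_P2_if_solution:
  assumes "n > 0" and P: "P \<in> carrier_mat (n\<^sup>2) (n\<^sup>2)" and "Q > 0" and "is_solution n Q P" and "m \<ge> 1"
  shows "mat_trace ((P1 n P * P2 n P) ^\<^sub>m m) = of_nat (crank P * n)
    + complex_of_real ((1 / Q ^ (2 * m) - 1) * (real (crank (P1 n P - P2 n P)) / 2))"
proof -
  have herm: "mat_adjoint P = P" and idem: "P * P = P"
    and rel: "P1 n P * P2 n P * P1 n P - P2 n P * P1 n P * P2 n P
      = complex_of_real (1 / Q\<^sup>2) \<cdot>\<^sub>m (P1 n P - P2 n P)"
    using assms is_solution_iff_relation[OF \<open>n > 0\<close> P, of Q] by auto
  interpret orthogonal_projection_pair "n ^ 3" "P1 n P" "P2 n P"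
    by (rule orthogonal_projection_pair_P1_P2[OF \<open>n > 0\<close> P herm idem])
  have tr: "mat_trace (P1 n P) = mat_trace (P2 n P)"
    using mat_trace_P1_P2[OF \<open>n > 0\<close> P] by simp
  have "mat_trace (P1 n P) = of_nat (crank P * n)"
    using mat_trace_P1_P2(1)[OF \<open>n > 0\<close> P] crank_idempotent[OF P idem] by simp
  moreover have "crank (P1 n P - P2 n P) = vec_space.rank (n ^ 3) (P1 n P - P2 n P)"
    unfolding crank_def using B_carrier by simp
  moreover have "(complex_of_real (1 / Q\<^sup>2)) ^ m = complex_of_real (1 / Q ^ (2 * m))"
    by (simp add: power_mult power_one_over)
  ultimately show ?thesis
    using mat_trace_power_if_relation[OF rel tr] \<open>m \<ge> 1\<close> by simp
qed

lemma solution_if_mat_trace_power_P1_P2: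
  assumes "n > 0" and P: "P \<in> carrier_mat (n\<^sup>2) (n\<^sup>2)" and herm: "mat_adjoint P = P" and idem: "P * P = P"
    and "Q > 1" and "k > 0"
    and traces: "\<forall>m\<in>{1, 2, 3::nat}. mat_trace ((P1 n P * P2 n P) ^\<^sub>m m)
      = of_nat (crank P * n) + complex_of_real ((1 / Q ^ (2 * m) - 1) * real k)"
  shows "is_solution n Q P \<and> nontrivial n P"
proof
  interpret orthogonal_projection_pair "n ^ 3" "P1 n P" "P2 n P"
    by (rule orthogonal_projection_pair_P1_P2[OF \<open>n > 0\<close> P herm idem])
  define q where "q = complex_of_real (1 / Q\<^sup>2)"
  have tr: "mat_trace (P1 n P) = mat_trace (P2 n P)"
    using mat_trace_P1_P2[OF \<open>n > 0\<close> P] by simp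
  have trA: "mat_trace (P1 n P) = of_nat (crank P * n)"
    using mat_trace_P1_P2(1)[OF \<open>n > 0\<close> P] crank_idempotent[OF P idem] by simp
  have T: "mat_trace ((P1 n P * P2 n P) ^\<^sub>m m) = mat_trace (P1 n P) + (q ^ m - 1) * of_nat k"
    if "m \<in> {1, 2, 3}" for m
  proof -
    have "q ^ m = complex_of_real (1 / Q ^ (2 * m))"
      unfolding q_def by (simp add: power_mult power_one_over)
    then show ?thesis using bspec[OF traces that] trA by simp
  qed
  show "is_solution n Q P"
    using relation_if_traces[OF _ tr T] is_solution_iff_relation[OF \<open>n > 0\<close> P, of Q] herm idem \<open>Q > 1\<close>
    by (simp add: q_def)
  have "P1 n P * P2 n P \<noteq> P1 n P"
  proof
    assume "P1 n P * P2 n P = P1 n P"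
    then have "(q - 1) * of_nat k = 0" using T[of 1] by simp
    then have "q = 1" using \<open>k > 0\<close> by simp
    then have "1 / Q\<^sup>2 = 1" unfolding q_def using of_real_eq_1_iff by blast
    moreover have "1 < Q\<^sup>2" using \<open>Q > 1\<close> by (intro one_less_power) auto
    ultimately show False by simp
  qed
  then show "nontrivial n P"
    unfolding nontrivial_def using P1_mult_P2_if_trivial[OF \<open>n > 0\<close>] by blast
qed

theorem proposition3:
  fixes n :: nat and P :: "complex mat"
  assumes n2: "n \<ge> 2" and Pdim: "P \<in> carrier_mat (n^2) (n^2)"
  shows
   "(\<forall>Q::real. Q > 0 \<longrightarrow> is_solution n Q P \<longrightarrow> nontrivial n P \<longrightarrow>
      (\<forall>m::nat. m \<ge> 1 \<longrightarrow>
         mat_trace ((P1 n P * P2 n P) ^\<^sub>m m)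
           = of_nat (crank P * n)
             + complex_of_real ((1 / Q ^ (2*m) - 1) * (real (crank (P1 n P - P2 n P)) / 2))))
    \<and>
    ((mat_adjoint P = P \<and> P * P = P) \<longrightarrow>
     (\<forall>Q::real. \<forall>k::nat. Q > 1 \<longrightarrow> k > 0 \<longrightarrow>
       (\<forall>m\<in>{1,2,3::nat}. mat_trace ((P1 n P * P2 n P) ^\<^sub>m m)
           = of_nat (crank P * n) + complex_of_real ((1 / Q ^ (2*m) - 1) * real k)) \<longrightarrow>
       is_solution n Q P \<and> nontrivial n P))"
proof -
  have "n > 0" using n2 by simp
  then show ?thesis
    using mat_trace_power_P1_P2_if_solution[OF _ Pdim] solution_if_mat_trace_power_P1_P2[OF _ Pdim]
    by blast
qed

end
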